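(* Assume the setting in the context (in particular Assumption (A)). Let $\rho>0$, $z_0\in V_f(\rho)$ and $\epsilon>0$, run Algorithm $\mathcal{A}_*$ from $z_0$ with accuracy $\epsilon$, and suppose $j_{out}\geq2$. Suppose that there exist an integer $T\in\{2,\dots,j_{out}\}$ and an integer $\ell\in\{0,\dots,j_{out}-T\}$ such that $m_{\ell+1}>\frac{1}{\sqrt{15}}m_{\ell+1+T}$. Then: (i) $s_j\in\left(0,\frac{\sqrt{15}}{4}\right]$ for all $j\in\{\ell+2,\dots,\ell+T\}$; (ii) $\sum_{j=\ell+2}^{\ell+T}\ln\left(\max\{1,(4s_j)^4\}\right)<4\ln15$; (iii) $\sum_{j=\ell+2}^{\ell+T}\ln\left(\frac{1}{s_j^2}-1\right)\leq\ln\left(1+\frac{f(z_0)-f^*}{\epsilon}\right)$; (iv) $T<5+\frac{1}{\ln15}\ln\left(1+\frac{f(z_0)-f^*}{\epsilon}\right)$.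
   Context: Let $f:\mathbb{R}^n\to(-\infty,\infty]$ be a proper closed convex function such that the problem $f^*=\min_{x\in\mathbb{R}^n}f(x)$ is solvable. Let $\Omega_f=\{x: f(x)=f^*\}$, fix a norm $\|\cdot\|$ on $\mathbb{R}^n$ with dual norm $\|y\|_*=\sup\{y^Tz:\|z\|\leq 1\}$, and for $x\in\mathbb{R}^n$ let $\bar x=\arg\min_{z\in\Omega_f}\|x-z\|$. For $\rho\geq0$ let $V_f(\rho)=\{x: f(x)-f^*\leq\rho\}$. Let $\mathcal{A}$ be an iterative algorithm: for $x_0\in\mathrm{dom} f$ and integer $k\geq1$, $\mathcal{A}(x_0,k)$ denotes its $k$-th iterate started from $x_0$ (and $\mathcal{A}(x_0,0)=x_0$). Assumption (A): (i) for every $\rho>0$ there is $\mu_\rho>0$ with $f(x_0)-f^*\geq\frac{\mu_\rho}{2}\|x_0-\bar x_0\|^2$ for all $x_0\in V_f(\rho)$; (ii) there exist $a_f>0$, $L_f>0$ and $g:\mathbb{R}^n\to\mathbb{R}^n$ with $g(x)=0\iff x\in\Omega_f$ such that for every $x_0\in\mathrm{dom} f$: $f(\mathcal{A}(x_0,1))\leq f(x_0)-\frac{1}{2L_f}\|g(x_0)\|_*^2$ and $f(\mathcal{A}(x_0,k))-f^*\leq\frac{a_f}{(k+1)^2}\|x_0-\bar x_0\|^2$ for all $k\geq1$; (iii) $\bar n_\rho:=\max\{\frac12,\sqrt{2a_f/\mu_\rho}\}$. Procedure $\mathcal{A}_d(r,n)$ (input $r\in\mathrm{dom} f$, $n\in\mathbb{R}$):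 set $x_0=r$, $k=0$. Repeat: $k\gets k+1$; set $x_k=\mathcal{A}(x_0,k)$ if $f(\mathcal{A}(x_0,k))\leq f(x_{k-1})$, and $x_k=x_{k-1}$ otherwise; $\ell=\lfloor k/2\rfloor$; until $k\geq n$ and $f(x_\ell)-f(x_k)\leq\frac13(f(x_0)-f(x_\ell))$. Output $z=x_k$, $m=k$. Algorithm $\mathcal{A}_*(z_0)$ (input $z_0\in\mathrm{dom} f$, $\epsilon>0$): set $m_0=1$, $m_{-1}=1$, $j=-1$. Repeat: $j\gets j+1$; $s_j=\sqrt{\frac{f(z_{j-1})-f(z_j)}{f(z_{j-2})-f(z_j)}}$ if $j\geq2$ and $s_j=0$ otherwise; $n_j=\max\{m_j,4s_jm_{j-1}\}$; $[z_{j+1},m_{j+1}]=\mathcal{A}_d(z_j,n_j)$; until $f(z_j)-f(z_{j+1})\leq\epsilon$. Output $z_{out}=z_{j+1}$, $j_{out}=j$. *)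

theory Defs
  imports "HOL-Analysis.Analysis"
begin

(* An extended-valued function f : R^n -> (-inf,inf] is represented by its
   domain D = dom f together with its (real) values on D; values of f outside D
   are irrelevant (they play the role of +infinity). *)

definition is_norm :: "('a::euclidean_space \<Rightarrow> real) \<Rightarrow> bool" where
  "is_norm N \<longleftrightarrow> (\<forall>x. N x = 0 \<longleftrightarrow> x = 0) \<and> (\<forall>x y. N (x + y) \<le> N x + N y)
     \<and> (\<forall>c x. N (c *\<^sub>R x) = \<bar>c\<bar> * N x)"

definition dual_norm :: "('a::euclidean_space \<Rightarrow> real) \<Rightarrow> 'a \<Rightarrow> real" where
  "dual_norm N y = Sup {y \<bullet> z | z. N z \<le> 1}"

definition proper_closed_convex :: "('a::euclidean_space \<Rightarrow> real) \<Rightarrow> 'a set \<Rightarrow> bool" where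
  "proper_closed_convex f D \<longleftrightarrow> D \<noteq> {} \<and> convex D \<and> convex_on D f
     \<and> (\<forall>c. closed {x \<in> D. f x \<le> c})"

definition fstar :: "('a \<Rightarrow> real) \<Rightarrow> 'a set \<Rightarrow> real" where
  "fstar f D = Inf (f ` D)"

definition Omega :: "('a \<Rightarrow> real) \<Rightarrow> 'a set \<Rightarrow> 'a set" where
  "Omega f D = {x \<in> D. f x = fstar f D}"

definition distN :: "('a::euclidean_space \<Rightarrow> real) \<Rightarrow> 'a set \<Rightarrow> 'a \<Rightarrow> real" where
  "distN N S x = Inf ((\<lambda>z. N (x - z)) ` S)"

definition Vf :: "('a \<Rightarrow> real) \<Rightarrow> 'a set \<Rightarrow> real \<Rightarrow> 'a set" where
  "Vf f D \<rho> = {x \<in> D. f x - fstar f D \<le> \<rho>}"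

(* Assumption (A) (i) and (ii); (iii) is only a definition of \<bar>n_rho and is not needed *)
definition assumption_A ::
  "('a::euclidean_space \<Rightarrow> real) \<Rightarrow> ('a \<Rightarrow> real) \<Rightarrow> 'a set \<Rightarrow> ('a \<Rightarrow> nat \<Rightarrow> 'a) \<Rightarrow> bool" where
  "assumption_A N f D Alg \<longleftrightarrow>
     (\<forall>\<rho>>0. \<exists>\<mu>>0. \<forall>x0 \<in> Vf f D \<rho>.
         f x0 - fstar f D \<ge> \<mu> / 2 * (distN N (Omega f D) x0)\<^sup>2)
   \<and> (\<exists>a>0. \<exists>L>0. \<exists>g::'a \<Rightarrow> 'a. (\<forall>x. g x = 0 \<longleftrightarrow> x \<in> Omega f D) \<and>
        (\<forall>x0 \<in> D. f (Alg x0 1) \<le> f x0 - 1 / (2 * L) * (dual_norm N (g x0))\<^sup>2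
           \<and> (\<forall>k\<ge>1. f (Alg x0 k) - fstar f D \<le> a / (real k + 1)\<^sup>2 * (distN N (Omega f D) x0)\<^sup>2)))"

primrec Ad_x :: "('a \<Rightarrow> real) \<Rightarrow> ('a \<Rightarrow> nat \<Rightarrow> 'a) \<Rightarrow> 'a \<Rightarrow> nat \<Rightarrow> 'a" where
  "Ad_x f Alg r 0 = r"
| "Ad_x f Alg r (Suc k) =
     (if f (Alg r (Suc k)) \<le> f (Ad_x f Alg r k) then Alg r (Suc k) else Ad_x f Alg r k)"

definition Ad_m :: "('a \<Rightarrow> real) \<Rightarrow> ('a \<Rightarrow> nat \<Rightarrow> 'a) \<Rightarrow> 'a \<Rightarrow> real \<Rightarrow> nat" where
  "Ad_m f Alg r n = (LEAST k. 1 \<le> k \<and> real k \<ge> n \<and>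
      f (Ad_x f Alg r (k div 2)) - f (Ad_x f Alg r k)
        \<le> 1/3 * (f (Ad_x f Alg r 0) - f (Ad_x f Alg r (k div 2))))"

definition Ad :: "('a \<Rightarrow> real) \<Rightarrow> ('a \<Rightarrow> nat \<Rightarrow> 'a) \<Rightarrow> 'a \<Rightarrow> real \<Rightarrow> 'a \<times> nat" where
  "Ad f Alg r n = (let m = Ad_m f Alg r n in (Ad_x f Alg r m, m))"

(* (z_j, m_j) produced by algorithm A_* started at z0 (ignoring the stopping test):
   m_0 = 1, m_{-1} = 1, s_0 = s_1 = 0,
   s_j = sqrt((f z_{j-1} - f z_j)/(f z_{j-2} - f z_j)) for j >= 2,
   n_j = max{m_j, 4 s_j m_{j-1}},  [z_{j+1}, m_{j+1}] = A_d(z_j, n_j). *)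
fun Astar_run :: "('a \<Rightarrow> real) \<Rightarrow> ('a \<Rightarrow> nat \<Rightarrow> 'a) \<Rightarrow> 'a \<Rightarrow> nat \<Rightarrow> 'a \<times> nat" where
  "Astar_run f Alg z0 0 = (z0, 1)"
| "Astar_run f Alg z0 (Suc 0) = Ad f Alg z0 (max (real 1) (4 * 0 * real 1))"
| "Astar_run f Alg z0 (Suc (Suc 0)) =
     (let (z1, m1) = Astar_run f Alg z0 (Suc 0) in
      Ad f Alg z1 (max (real m1) (4 * 0 * real 1)))"
| "Astar_run f Alg z0 (Suc (Suc (Suc j))) =
     (let (zj, mj) = Astar_run f Alg z0 (Suc (Suc j));
          (zj1, mj1) = Astar_run f Alg z0 (Suc j);
          zj2 = fst (Astar_run f Alg z0 j);
          sj = sqrt ((f zj1 - f zj) / (f zj2 - f zj))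
      in Ad f Alg zj (max (real mj) (4 * sj * real mj1)))"

definition Astar_z :: "('a \<Rightarrow> real) \<Rightarrow> ('a \<Rightarrow> nat \<Rightarrow> 'a) \<Rightarrow> 'a \<Rightarrow> nat \<Rightarrow> 'a" where
  "Astar_z f Alg z0 j = fst (Astar_run f Alg z0 j)"

definition Astar_m :: "('a \<Rightarrow> real) \<Rightarrow> ('a \<Rightarrow> nat \<Rightarrow> 'a) \<Rightarrow> 'a \<Rightarrow> nat \<Rightarrow> nat" where
  "Astar_m f Alg z0 j = snd (Astar_run f Alg z0 j)"

definition Astar_s :: "('a \<Rightarrow> real) \<Rightarrow> ('a \<Rightarrow> nat \<Rightarrow> 'a) \<Rightarrow> 'a \<Rightarrow> nat \<Rightarrow> real" where
  "Astar_s f Alg z0 j = (if j \<ge> 2 then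
      sqrt ((f (Astar_z f Alg z0 (j - 1)) - f (Astar_z f Alg z0 j))
          / (f (Astar_z f Alg z0 (j - 2)) - f (Astar_z f Alg z0 j)))
     else 0)"

definition is_jout :: "('a \<Rightarrow> real) \<Rightarrow> ('a \<Rightarrow> nat \<Rightarrow> 'a) \<Rightarrow> 'a \<Rightarrow> real \<Rightarrow> nat \<Rightarrow> bool" where
  "is_jout f Alg z0 \<epsilon> J \<longleftrightarrow>
     f (Astar_z f Alg z0 J) - f (Astar_z f Alg z0 (Suc J)) \<le> \<epsilon> \<and>
     (\<forall>j<J. f (Astar_z f Alg z0 j) - f (Astar_z f Alg z0 (Suc j)) > \<epsilon>)"

end

theory Submission
  imports Defs "HOL-Real_Asymp.Real_Asymp"
begin

(* Write d_i = f(z_i) - f(z_{i+1}). Since m_{j+1} >= 4 s_j m_{j-1} and the m_j increase, on a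
   window where m grows by less than the factor sqrt 15 every s_j is at most sqrt 15 / 4, and
   the factors max(1, 4 s_j) multiply to less than (m_{l+1+T} / m_{l+1})^2 < 15: this gives
   (i) and (ii). From s_j^2 = d_{j-1} / (d_{j-2} + d_{j-1}) one gets 1/s_j^2 - 1 = d_{j-2} / d_{j-1},
   so the sum in (iii) telescopes to ln (d_l / d_{l+T-1}), with d_l <= f(z_0) - f^* and
   d_{l+T-1} > eps before termination. Finally (1/s^2 - 1) max(1, (4s)^4) >= 15 for
   0 < s <= sqrt 15 / 4, so adding (ii) and (iii) bounds (T - 1) ln 15, which is (iv). *)

lemma max_one_power:
  fixes x :: real
  assumes "0 \<le> x"
  shows "max 1 (x ^ n) = max 1 x ^ n"
proof (cases "x \<le> 1")
  case True
  then show ?thesis using assms power_le_one[of x n] by (simp add: max_def)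
next
  case False
  then show ?thesis using one_le_power[of x n] by (simp add: max_def)
qed

lemma sum_two_step_increments_le:
  fixes g :: "nat \<Rightarrow> real"
  assumes "incseq g" "a \<le> b"
  shows "(\<Sum>j = Suc a..b. g (Suc j) - g (j - 1)) \<le> 2 * (g (Suc b) - g a)"
proof -
  have "(\<Sum>j = Suc a..b. g (Suc j) - g (j - 1))
      = (\<Sum>j = Suc a..b. g (Suc j) - g j) + (\<Sum>j = Suc a..b. g j - g (j - 1))"
    by (simp add: sum.distrib[symmetric])
  also have "\<dots> = (g (Suc b) - g (Suc a)) + (g b - g a)"
    using assms(2) sum_telescope''[of a b g] by (simp add: sum_Suc_diff)
  also have "\<dots> \<le> 2 * (g (Suc b) - g a)"
    using incseqD[OF assms(1), of a "Suc a"] incseqD[OF assms(1), of b "Suc b"] by simp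
  finally show ?thesis .
qed

lemma fifteen_le_inverse_minus_one_mult_max:
  fixes x :: real
  assumes "0 < x" and "x \<le> 15/16"
  shows "15 \<le> (1 / x - 1) * max 1 (256 * x\<^sup>2)"
proof (cases "x \<le> 1/16")
  case True
  then have "256 * x\<^sup>2 \<le> 1"
    using assms(1) power_mono[of x "1/16" 2] by (simp add: power2_eq_square)
  moreover have "16 \<le> 1 / x" using True assms(1) by (simp add: le_divide_eq)
  ultimately show ?thesis by simp
next
  case False
  then have "1 \<le> 256 * x\<^sup>2"
    using power_mono[of "1/16" x 2] by (simp add: power2_eq_square)
  then have "(1 / x - 1) * max 1 (256 * x\<^sup>2) = 256 * x * (1 - x)"
    using assms(1) by (simp add: power2_eq_square field_simps)
  moreover have "0 \<le> (16 * x - 1) * (15 - 16 * x)"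
    using False assms(2) by (intro mult_nonneg_nonneg) auto
  then have "15 \<le> 256 * x * (1 - x)" by (simp add: algebra_simps)
  ultimately show ?thesis by simp
qed

lemma ln_15_le_ln_odds_add_ln_max:
  fixes s :: real
  assumes "0 < s" and "s \<le> sqrt 15 / 4"
  shows "ln 15 \<le> ln (1 / s\<^sup>2 - 1) + ln (max 1 ((4 * s) ^ 4))"
proof -
  have "s\<^sup>2 \<le> (sqrt 15 / 4)\<^sup>2" using assms by (intro power_mono) auto
  then have s2: "s\<^sup>2 \<le> 15/16" by (simp add: power_divide)
  have "0 < 1 / s\<^sup>2 - 1" using s2 assms(1) by (simp add: field_simps)
  have "(4 * s) ^ 4 = 256 * (s\<^sup>2)\<^sup>2" by (simp add: power_mult_distrib flip: power_mult)
  then have "15 \<le> (1 / s\<^sup>2 - 1) * max 1 ((4 * s) ^ 4)"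
    using fifteen_le_inverse_minus_one_mult_max[of "s\<^sup>2"] s2 assms(1) by simp
  then have "ln 15 \<le> ln ((1 / s\<^sup>2 - 1) * max 1 ((4 * s) ^ 4))" by (rule ln_mono) simp
  also have "\<dots> = ln (1 / s\<^sup>2 - 1) + ln (max 1 ((4 * s) ^ 4))"
    using \<open>0 < 1 / s\<^sup>2 - 1\<close> by (simp add: ln_mult_pos)
  finally show ?thesis .
qed

lemma window_length_bound:
  fixes s :: "nat \<Rightarrow> real"
  assumes "1 \<le> T"
    and s: "\<forall>j \<in> {l+2..l+T}. 0 < s j \<and> s j \<le> sqrt 15 / 4"
    and max_sum: "(\<Sum>j = l+2..l+T. ln (max 1 ((4 * s j) ^ 4))) < 4 * ln 15"
    and odds_sum: "(\<Sum>j = l+2..l+T. ln (1 / (s j)\<^sup>2 - 1)) \<le> L"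
  shows "real T < 5 + 1 / ln 15 * L"
proof -
  have "(real T - 1) * ln 15 = (\<Sum>j = l+2..l+T. ln 15)"
    using assms(1) by (simp add: of_nat_diff)
  also have "\<dots> \<le> (\<Sum>j = l+2..l+T. ln (1 / (s j)\<^sup>2 - 1) + ln (max 1 ((4 * s j) ^ 4)))"
    using s ln_15_le_ln_odds_add_ln_max by (intro sum_mono) blast
  also have "\<dots> < L + 4 * ln 15"
    using max_sum odds_sum by (simp add: sum.distrib)
  finally have "real T * ln 15 < (5 + 1 / ln 15 * L) * ln 15"
    by (simp add: algebra_simps)
  then show ?thesis by (simp add: mult_less_cancel_right)
qed

definition Ad_stops :: "('a \<Rightarrow> real) \<Rightarrow> ('a \<Rightarrow> nat \<Rightarrow> 'a) \<Rightarrow> 'a \<Rightarrow> real \<Rightarrow> nat \<Rightarrow> bool" where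
  "Ad_stops f Alg r n k \<longleftrightarrow> 1 \<le> k \<and> n \<le> real k \<and>
     f (Ad_x f Alg r (k div 2)) - f (Ad_x f Alg r k)
       \<le> 1/3 * (f (Ad_x f Alg r 0) - f (Ad_x f Alg r (k div 2)))"

lemma Ad_m_stops:
  assumes "\<exists>k. Ad_stops f Alg r n k"
  shows "Ad_stops f Alg r n (Ad_m f Alg r n)"
  using LeastI_ex[OF assms] unfolding Ad_m_def Ad_stops_def .

lemma decseq_f_Ad_x: "decseq (\<lambda>k. f (Ad_x f Alg r k))"
  by (rule decseq_SucI) simp

lemma f_Ad_x_le_Alg:
  assumes "1 \<le> k"
  shows "f (Ad_x f Alg r k) \<le> f (Alg r k)"
  using assms by (cases k) auto

lemma Ad_x_in_D:
  assumes "r \<in> D" and "\<And>x k. x \<in> D \<Longrightarrow> 1 \<le> k \<Longrightarrow> Alg x k \<in> D"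
  shows "Ad_x f Alg r k \<in> D"
  using assms by (induction k) auto

lemma Ad_stops_exists:
  assumes r: "r \<in> D" and Alg_in_D: "\<And>x k. x \<in> D \<Longrightarrow> 1 \<le> k \<Longrightarrow> Alg x k \<in> D"
    and lower: "\<And>y. y \<in> D \<Longrightarrow> fs \<le> f y"
    and conv: "(\<lambda>k. f (Alg r k)) \<longlonglongrightarrow> fs"
  shows "\<exists>k. Ad_stops f Alg r n k"
proof -
  \<comment> \<open>Once \<open>f (Ad_x M)\<close> is within a quarter of \<open>\<delta>\<close> of \<open>fs\<close>, the test passes at \<open>k = 2 M\<close>.\<close>
  define \<delta> where "\<delta> = f r - fs"
  have "\<exists>M. max n 1 \<le> real M \<and> f (Ad_x f Alg r M) - fs \<le> \<delta> / 4"
  proof (cases "\<delta> > 0")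
    case True
    obtain M0 :: nat where M0: "max n 1 \<le> real M0" using real_arch_simple by blast
    have "eventually (\<lambda>k. max n 1 \<le> real k) sequentially"
      using eventually_ge_at_top[of M0] by eventually_elim (use M0 in \<open>auto intro: order_trans\<close>)
    moreover have "eventually (\<lambda>k. f (Alg r k) < fs + \<delta> / 4) sequentially"
      using order_tendstoD(2)[OF conv] True by simp
    ultimately have "eventually (\<lambda>k. max n 1 \<le> real k \<and> f (Alg r k) < fs + \<delta> / 4) sequentially"
      by (rule eventually_conj)
    then obtain M where M: "max n 1 \<le> real M" "f (Alg r M) < fs + \<delta> / 4"
      unfolding eventually_sequentially by blast
    then show ?thesis using f_Ad_x_le_Alg[of M f Alg r] by force
  next
    case False
    obtain M :: nat where "max n 1 \<le> real M" using real_arch_simple by blast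
    moreover have "f (Ad_x f Alg r M) \<le> f r"
      using decseqD[OF decseq_f_Ad_x, of 0 M] by simp
    ultimately show ?thesis using False \<delta>_def by (intro exI[of _ M]) auto
  qed
  then obtain M where M: "max n 1 \<le> real M" "f (Ad_x f Alg r M) - fs \<le> \<delta> / 4" by blast
  have "Ad_x f Alg r (2 * M) \<in> D" using r Alg_in_D by (rule Ad_x_in_D)
  then have "fs \<le> f (Ad_x f Alg r (2 * M))" by (rule lower)
  with M have "Ad_stops f Alg r n (2 * M)"
    unfolding Ad_stops_def \<delta>_def by auto
  then show ?thesis ..
qed

lemma fstar_eq_min:
  assumes "x \<in> D" and "\<forall>y\<in>D. f x \<le> f y"
  shows "fstar f D = f x"
  unfolding fstar_def by (rule cInf_eq_minimum) (use assms in auto)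

lemma assumption_A_tendsto_fstar:
  assumes "assumption_A N f D Alg" and lower: "\<And>y. y \<in> D \<Longrightarrow> fstar f D \<le> f y"
    and r: "r \<in> D" and Alg_in_D: "\<And>x k. x \<in> D \<Longrightarrow> 1 \<le> k \<Longrightarrow> Alg x k \<in> D"
  shows "(\<lambda>k. f (Alg r k)) \<longlonglongrightarrow> fstar f D"
proof -
  obtain a where rate: "\<forall>k\<ge>1. f (Alg r k) - fstar f D \<le> a / (real k + 1)\<^sup>2 * (distN N (Omega f D) r)\<^sup>2"
    using assms(1) r unfolding assumption_A_def by (elim conjE exE) blast
  define c where "c = a * (distN N (Omega f D) r)\<^sup>2"
  have "(\<lambda>k. c / (real k + 1)\<^sup>2) \<longlonglongrightarrow> 0"
    by real_asymp
  from tendsto_add[OF tendsto_const[of "fstar f D"] this]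
  have upper_lim: "(\<lambda>k. fstar f D + c / (real k + 1)\<^sup>2) \<longlonglongrightarrow> fstar f D"
    by simp
  have upper: "eventually (\<lambda>k. f (Alg r k) \<le> fstar f D + c / (real k + 1)\<^sup>2) sequentially"
    using eventually_ge_at_top[of 1] by eventually_elim (use rate in \<open>auto simp: c_def\<close>)
  have lower_ev: "eventually (\<lambda>k. fstar f D \<le> f (Alg r k)) sequentially"
    using eventually_ge_at_top[of 1] by eventually_elim (use lower Alg_in_D r in blast)
  show ?thesis by (rule tendsto_sandwich[OF lower_ev upper tendsto_const upper_lim])
qed

(* With s_0 = s_1 = 0 the three defining equations of Astar_run are instances of one recurrence. *)
lemma Astar_run_Suc:
  "Astar_run f Alg z0 (Suc j) = Ad f Alg (Astar_z f Alg z0 j)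
     (max (real (Astar_m f Alg z0 j)) (4 * Astar_s f Alg z0 j * real (Astar_m f Alg z0 (j - 1))))"
proof -
  consider "j = 0" | "j = 1" | i where "j = Suc (Suc i)"
    by (metis One_nat_def not0_implies_Suc)
  then show ?thesis
    by cases (simp_all add: Astar_z_def Astar_m_def Astar_s_def case_prod_beta Let_def)
qed

lemma Astar_m_Suc:
  "Astar_m f Alg z0 (Suc j) = Ad_m f Alg (Astar_z f Alg z0 j)
     (max (real (Astar_m f Alg z0 j)) (4 * Astar_s f Alg z0 j * real (Astar_m f Alg z0 (j - 1))))"
  by (simp add: Astar_m_def Astar_run_Suc Ad_def Let_def)

lemma Astar_z_Suc:
  "Astar_z f Alg z0 (Suc j) = Ad_x f Alg (Astar_z f Alg z0 j) (Astar_m f Alg z0 (Suc j))"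
  by (simp add: Astar_z_def Astar_m_Suc Astar_run_Suc Ad_def Let_def)

locale Astar_run_setting =
  fixes f :: "'a \<Rightarrow> real" and Alg :: "'a \<Rightarrow> nat \<Rightarrow> 'a" and D :: "'a set" and z0 :: 'a
  assumes Alg_in_D: "\<And>x k. x \<in> D \<Longrightarrow> 1 \<le> k \<Longrightarrow> Alg x k \<in> D"
    and z0_in_D: "z0 \<in> D"
    and Ad_terminates: "\<And>r n. r \<in> D \<Longrightarrow> \<exists>k. Ad_stops f Alg r n k"
begin

abbreviation "z \<equiv> Astar_z f Alg z0"
abbreviation "m \<equiv> Astar_m f Alg z0"
abbreviation "s \<equiv> Astar_s f Alg z0"

definition gap :: "nat \<Rightarrow> real" where
  "gap i = f (z i) - f (z (Suc i))"

lemma z_in_D: "z j \<in> D"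
proof (induction j)
  case 0
  then show ?case using z0_in_D by (simp add: Astar_z_def)
next
  case (Suc j)
  then show ?case using Alg_in_D by (simp add: Astar_z_Suc Ad_x_in_D)
qed

lemma m_Suc_stops:
  "Ad_stops f Alg (z j) (max (real (m j)) (4 * s j * real (m (j - 1)))) (m (Suc j))"
  unfolding Astar_m_Suc by (rule Ad_m_stops[OF Ad_terminates[OF z_in_D]])

lemma m_ge_1: "1 \<le> m j"
  using m_Suc_stops[of "j - 1"] by (cases j) (auto simp: Astar_m_def Ad_stops_def)

lemma incseq_m: "incseq m"
  using m_Suc_stops by (intro incseq_SucI) (simp add: Ad_stops_def)

lemma four_s_mult_m_le: "4 * s j * real (m (j - 1)) \<le> real (m (Suc j))"
  using m_Suc_stops[of j] by (simp add: Ad_stops_def)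

lemma decseq_f_z: "decseq (\<lambda>j. f (z j))"
proof (rule decseq_SucI)
  fix j
  show "f (z (Suc j)) \<le> f (z j)"
    using decseqD[OF decseq_f_Ad_x, of 0 "m (Suc j)" f Alg "z j"] by (simp add: Astar_z_Suc)
qed

lemma s_eq_sqrt_gap:
  assumes "2 \<le> j"
  shows "s j = sqrt (gap (j - 1) / (gap (j - 2) + gap (j - 1)))"
proof -
  have "Suc (j - 1) = j" "Suc (j - 2) = j - 1" using assms by auto
  then show ?thesis using assms by (simp add: Astar_s_def gap_def)
qed

lemma s_pos_and_odds:
  assumes "2 \<le> j" "0 < gap (j - 2)" "0 < gap (j - 1)"
  shows "0 < s j" "1 / (s j)\<^sup>2 - 1 = gap (j - 2) / gap (j - 1)"
  using assms(2,3) by (simp_all add: s_eq_sqrt_gap[OF assms(1)] field_simps)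

lemma ln_max_one_four_s_pow4_le:
  assumes "0 \<le> s j"
  shows "ln (max 1 ((4 * s j) ^ 4)) \<le> 4 * (ln (m (Suc j)) - ln (m (j - 1)))"
proof -
  have m_pos: "0 < real (m (j - 1))" using m_ge_1[of "j - 1"] by simp
  have "max 1 (4 * s j) * real (m (j - 1)) \<le> real (m (Suc j))"
    using four_s_mult_m_le[of j] incseqD[OF incseq_m, of "j - 1" "Suc j"] by (auto simp: max_def)
  then have "max 1 (4 * s j) \<le> real (m (Suc j)) / real (m (j - 1))"
    using m_pos by (simp add: le_divide_eq)
  then have "ln (max 1 (4 * s j)) \<le> ln (real (m (Suc j)) / real (m (j - 1)))"
    by (rule ln_mono) simp
  also have "\<dots> = ln (m (Suc j)) - ln (m (j - 1))"
    using m_pos m_ge_1[of "Suc j"] by (simp add: ln_divide_pos)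
  finally have "ln (max 1 (4 * s j)) \<le> ln (m (Suc j)) - ln (m (j - 1))" .
  moreover have "0 \<le> 4 * s j" using assms by simp
  then have "ln (max 1 ((4 * s j) ^ 4)) = 4 * ln (max 1 (4 * s j))"
    by (simp only: max_one_power ln_realpow)
  ultimately show ?thesis by simp
qed

lemma s_window_bounds:
  assumes gaps: "\<And>i. i < J \<Longrightarrow> 0 < gap i" and "l + T \<le> J"
    and growth: "real (m (l + 1 + T)) < sqrt 15 * real (m (l + 1))"
    and j: "j \<in> {l+2..l+T}"
  shows "0 < s j \<and> s j \<le> sqrt 15 / 4"
proof -
  have "2 \<le> j" "j - 2 < J" "j - 1 < J" using j assms(2) by auto
  then have s_pos: "0 < s j" using s_pos_and_odds(1) gaps by blast
  have "4 * s j * real (m (l + 1)) \<le> 4 * s j * real (m (j - 1))"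
    using s_pos incseqD[OF incseq_m, of "l + 1" "j - 1"] j by (intro mult_left_mono) auto
  also have "\<dots> \<le> real (m (Suc j))" by (rule four_s_mult_m_le)
  also have "\<dots> \<le> real (m (l + 1 + T))" using incseqD[OF incseq_m, of "Suc j" "l + 1 + T"] j by simp
  also have "\<dots> < sqrt 15 * real (m (l + 1))" by (rule growth)
  finally have "4 * s j < sqrt 15" using m_ge_1[of "l + 1"] by simp
  with s_pos show ?thesis by simp
qed

lemma sum_ln_max_window_less:
  assumes "1 \<le> T" and nonneg: "\<And>j. j \<in> {l+2..l+T} \<Longrightarrow> 0 \<le> s j"
    and growth: "real (m (l + 1 + T)) < sqrt 15 * real (m (l + 1))"
  shows "(\<Sum>j = l+2..l+T. ln (max 1 ((4 * s j) ^ 4))) < 4 * ln 15"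
proof -
  define g where "g i = ln (real (m i))" for i
  have "incseq g"
  proof (rule incseq_SucI)
    fix i
    show "g i \<le> g (Suc i)"
      using m_ge_1[of i] incseqD[OF incseq_m, of i "Suc i"] by (simp add: g_def)
  qed
  have "(\<Sum>j = l+2..l+T. ln (max 1 ((4 * s j) ^ 4))) \<le> (\<Sum>j = l+2..l+T. 4 * (g (Suc j) - g (j - 1)))"
    by (rule sum_mono) (use nonneg ln_max_one_four_s_pow4_le in \<open>simp add: g_def\<close>)
  also have "\<dots> = 4 * (\<Sum>j = l+2..l+T. g (Suc j) - g (j - 1))"
    by (rule sum_distrib_left[symmetric])
  also have "\<dots> \<le> 4 * (2 * (g (l + 1 + T) - g (l + 1)))"
    using sum_two_step_increments_le[OF \<open>incseq g\<close>, of "l + 1" "l + T"] assms(1)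
    by (simp add: numeral_2_eq_2)
  also have "\<dots> < 4 * ln 15"
  proof -
    have "g (l + 1 + T) < ln (sqrt 15 * real (m (l + 1)))"
      using growth m_ge_1[of "l + 1 + T"] by (simp add: g_def)
    also have "\<dots> = ln 15 / 2 + g (l + 1)"
      using m_ge_1[of "l + 1"] by (simp add: g_def ln_mult_pos ln_sqrt)
    finally show ?thesis by simp
  qed
  finally show ?thesis .
qed

lemma sum_ln_odds_window_eq:
  assumes gaps: "\<And>i. i < J \<Longrightarrow> 0 < gap i" and "1 \<le> T" "l + T \<le> J"
  shows "(\<Sum>j = l+2..l+T. ln (1 / (s j)\<^sup>2 - 1)) = ln (gap l) - ln (gap (l + T - 1))"
proof -
  have "(\<Sum>j = l+2..l+T. ln (1 / (s j)\<^sup>2 - 1))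
      = (\<Sum>j = Suc (l + 1)..l+T. - ln (gap (j - 1)) - - ln (gap (j - 1 - 1)))"
  proof (rule sum.cong)
    fix j assume j: "j \<in> {Suc (l + 1)..l + T}"
    then have odds: "2 \<le> j" "0 < gap (j - 2)" "0 < gap (j - 1)" using gaps assms(3) by auto
    have "j - 1 - 1 = j - 2" by simp
    moreover have "ln (1 / (s j)\<^sup>2 - 1) = ln (gap (j - 2)) - ln (gap (j - 1))"
      using odds by (simp add: s_pos_and_odds(2) ln_divide_pos)
    ultimately show "ln (1 / (s j)\<^sup>2 - 1) = - ln (gap (j - 1)) - - ln (gap (j - 1 - 1))"
      by simp
  qed simp
  also have "\<dots> = ln (gap l) - ln (gap (l + T - 1))"
    using sum_telescope''[of "l + 1" "l + T" "\<lambda>j. - ln (gap (j - 1))"] assms(2) by simp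
  finally show ?thesis .
qed

lemma sum_ln_odds_window_le:
  assumes "0 < \<epsilon>" and gaps: "\<And>i. i < J \<Longrightarrow> \<epsilon> < gap i" and "1 \<le> T" "l + T \<le> J"
    and lower: "\<And>y. y \<in> D \<Longrightarrow> fs \<le> f y"
  shows "(\<Sum>j = l+2..l+T. ln (1 / (s j)\<^sup>2 - 1)) \<le> ln (1 + (f z0 - fs) / \<epsilon>)"
proof -
  have gaps_pos: "\<And>i. i < J \<Longrightarrow> 0 < gap i" using gaps assms(1) by (meson less_trans)
  have "l < J" "l + T - 1 < J" using assms(3,4) by auto
  have "f (z l) \<le> f z0" using decseqD[OF decseq_f_z, of 0 l] by (simp add: Astar_z_def)
  moreover have "fs \<le> f (z (Suc l))" using lower z_in_D by blast
  ultimately have gap_l: "gap l \<le> f z0 - fs" by (simp add: gap_def)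
  have "(\<Sum>j = l+2..l+T. ln (1 / (s j)\<^sup>2 - 1)) = ln (gap l) - ln (gap (l + T - 1))"
    using gaps_pos assms(3,4) by (rule sum_ln_odds_window_eq)
  also have "\<dots> < ln (f z0 - fs) - ln \<epsilon>"
  proof -
    have "ln (gap l) \<le> ln (f z0 - fs)" by (rule ln_mono[OF gap_l gaps_pos[OF \<open>l < J\<close>]])
    moreover have "ln \<epsilon> < ln (gap (l + T - 1))" using gaps[OF \<open>l + T - 1 < J\<close>] assms(1) by simp
    ultimately show ?thesis by simp
  qed
  also have "\<dots> = ln ((f z0 - fs) / \<epsilon>)"
    using gap_l gaps_pos[OF \<open>l < J\<close>] assms(1) by (simp add: ln_divide_pos)
  also have "\<dots> \<le> ln (1 + (f z0 - fs) / \<epsilon>)"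
  proof (rule ln_mono)
    show "0 < (f z0 - fs) / \<epsilon>" using gap_l gaps_pos[OF \<open>l < J\<close>] assms(1) by simp
  qed simp
  finally show ?thesis by simp
qed

end

theorem lemma3:
  fixes N :: "'a::euclidean_space \<Rightarrow> real"
    and f :: "'a \<Rightarrow> real" and D :: "'a set"
    and Alg :: "'a \<Rightarrow> nat \<Rightarrow> 'a"
    and \<rho> \<epsilon> :: real and z0 :: 'a and jout T l :: nat
  assumes "is_norm N"
    and "proper_closed_convex f D"
    and "\<exists>x\<in>D. \<forall>y\<in>D. f x \<le> f y"
    and "\<forall>x. Alg x 0 = x"
    and "\<forall>x\<in>D. \<forall>k\<ge>1. Alg x k \<in> D"
    and "assumption_A N f D Alg"
    and "\<rho> > 0" and "z0 \<in> Vf f D \<rho>" and "\<epsilon> > 0"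
    and "is_jout f Alg z0 \<epsilon> jout" and "jout \<ge> 2"
    and "2 \<le> T" and "T \<le> jout" and "l \<le> jout - T"
    and "real (Astar_m f Alg z0 (l + 1)) > 1 / sqrt 15 * real (Astar_m f Alg z0 (l + 1 + T))"
  shows "(\<forall>j \<in> {l+2..l+T}. 0 < Astar_s f Alg z0 j \<and> Astar_s f Alg z0 j \<le> sqrt 15 / 4)
    \<and> (\<Sum>j = l+2..l+T. ln (max 1 ((4 * Astar_s f Alg z0 j) ^ 4))) < 4 * ln 15
    \<and> (\<Sum>j = l+2..l+T. ln (1 / (Astar_s f Alg z0 j)\<^sup>2 - 1))
        \<le> ln (1 + (f z0 - fstar f D) / \<epsilon>)
    \<and> real T < 5 + 1 / ln 15 * ln (1 + (f z0 - fstar f D) / \<epsilon>)"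
proof -
  obtain x where "x \<in> D" "\<forall>y\<in>D. f x \<le> f y" using assms(3) by blast
  then have lower: "\<And>y. y \<in> D \<Longrightarrow> fstar f D \<le> f y" by (simp add: fstar_eq_min)
  have Alg_in_D: "\<And>x k. x \<in> D \<Longrightarrow> 1 \<le> k \<Longrightarrow> Alg x k \<in> D" using assms(5) by blast
  interpret Astar_run_setting f Alg D z0
  proof
    show "z0 \<in> D" using assms(8) by (simp add: Vf_def)
    show "\<exists>k. Ad_stops f Alg r n k" if "r \<in> D" for r n
    proof (rule Ad_stops_exists)
      show "(\<lambda>k. f (Alg r k)) \<longlonglongrightarrow> fstar f D"
        using assms(6) lower that Alg_in_D by (rule assumption_A_tendsto_fstar)
    qed (use that Alg_in_D lower in auto)
  qed (rule Alg_in_D)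
  have gaps: "\<And>i. i < jout \<Longrightarrow> \<epsilon> < gap i"
    using assms(10) by (simp add: is_jout_def gap_def)
  then have gaps_pos: "\<And>i. i < jout \<Longrightarrow> 0 < gap i" using assms(9) by (meson less_trans)
  have window: "1 \<le> T" "l + T \<le> jout" using assms(12-14) by auto
  have growth: "real (m (l + 1 + T)) < sqrt 15 * real (m (l + 1))"
    using assms(15) by (simp add: field_simps)
  have i: "\<forall>j \<in> {l+2..l+T}. 0 < s j \<and> s j \<le> sqrt 15 / 4"
    using s_window_bounds[OF gaps_pos window(2) growth] by blast
  have ii: "(\<Sum>j = l+2..l+T. ln (max 1 ((4 * s j) ^ 4))) < 4 * ln 15"
    by (rule sum_ln_max_window_less[OF window(1) _ growth]) (meson i less_imp_le)
  have iii: "(\<Sum>j = l+2..l+T. ln (1 / (s j)\<^sup>2 - 1)) \<le> ln (1 + (f z0 - fstar f D) / \<epsilon>)"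
    using sum_ln_odds_window_le[OF assms(9) gaps window lower] .
  show ?thesis using i ii iii window_length_bound[OF window(1) i ii iii] by blast
qed

end
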